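(* Let $\phi:\mathbb{C}_0\to\mathbb{C}_0$ be a non-constant analytic function of the form $\phi(s)=c_0s+\varphi(s)$ with $c_0\in\mathbb{N}_0$, $\varphi\in\mathcal{D}$, such that $C_\phi f=f\circ\phi$ maps $\mathcal{A}^+$ into itself. Suppose moreover that $\phi$ has a continuous extension to $\overline{\mathbb{C}_0}=\{\operatorname{Re}s\ge0\}$ which preserves the boundary, i.e. $\phi(i\mathbb{R})\subseteq i\mathbb{R}$. Then $\phi(s)=c_0s+i\tau$ with $c_0\in\mathbb{N}_0$ and $\tau\in\mathbb{R}$.
   Context: $\mathbb{C}_0=\{\operatorname{Re}s>0\}$. $\mathcal{A}^+$ is the Banach algebra of Dirichlet series $f(s)=\sum_{n\ge1}a_nn^{-s}$ with $\|f\|_{\mathcal{A}^+}=\sum|a_n|<\infty$, viewed as functions on $\{\operatorname{Re}s\ge0\}$, with pointwise product. $\mathcal{D}$ is the space of analytic functions on $\mathbb{C}_0$ representable by a convergent Dirichlet series $\sum c_nn^{-s}$ for $\operatorname{Re}s$ large enough. $\mathbb{N}_0=\{0,1,2,\dots\}$. *)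

theory Defs
  imports "HOL-Analysis.Analysis"
begin

definition C0 :: "complex set" where "C0 = {s. 0 < Re s}"
definition C0_closure :: "complex set" where "C0_closure = {s. 0 \<le> Re s}"

text \<open>Dirichlet series sum of coefficients a (the term n = 0 vanishes since 0 powr z = 0),
  i.e. sum over n >= 1 of a n * n^(-s).\<close>
definition dirichlet_series :: "(nat \<Rightarrow> complex) \<Rightarrow> complex \<Rightarrow> complex" where
  "dirichlet_series a s = (\<Sum>n. a n * (of_nat n) powr (- s))"

definition Aplus :: "(complex \<Rightarrow> complex) set" where
  "Aplus = {f. \<exists>a. summable (\<lambda>n. norm (a n)) \<and>
                 (\<forall>s\<in>C0_closure. f s = dirichlet_series a s)}"

definition Dclass :: "(complex \<Rightarrow> complex) set" where
  "Dclass = {g. g holomorphic_on C0 \<and>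
                (\<exists>c \<sigma>. \<forall>s. \<sigma> < Re s \<longrightarrow>
                   (\<lambda>n. c n * (of_nat n) powr (- s)) sums g s)}"

end

theory Submission
  imports Defs "HOL-Complex_Analysis.Complex_Analysis"
begin

text \<open>By Schwarz reflection across the imaginary axis, the boundary condition extends \<open>\<phi>\<close> to an
  entire function \<open>F\<close> with \<open>F (- cnj z) = - cnj (F z)\<close>; since \<open>\<phi>\<close> maps the right half-plane
  into itself, \<open>F\<close> satisfies \<open>Re z * Re (F z) \<ge> 0\<close> everywhere. Integrating \<open>Re F\<close> over the circle
  \<open>|w| = R\<close> against \<open>cnj w ^ n - (-1) ^ n * w ^ n\<close> yields \<open>a\<^sub>n R\<^sup>n\<close> (by the symmetry of \<open>F\<close>), and this weight
  is dominated pointwise by \<open>n\<close> times the nonnegative weight for \<open>n = 1\<close>. Hence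
  \<open>|a\<^sub>n| R\<^sup>n \<le> n Re a\<^sub>1 R\<close> for all \<open>R\<close>, so \<open>F\<close> is affine. Then \<open>\<psi> x = F 0 + (F' 0 - c\<^sub>0) x\<close> for large
  real \<open>x\<close>, while a convergent Dirichlet series stays bounded as \<open>x \<rightarrow> \<infinity>\<close>; thus \<open>F' 0 = c\<^sub>0\<close>, and
  \<open>Re (F 0) = 0\<close> by the boundary condition.\<close>

lemma has_integral_cnjI: "(f has_integral I) A \<Longrightarrow> ((\<lambda>x. cnj (f x)) has_integral cnj I) A"
  using has_integral_cnj[of f I A] by (simp add: comp_def)

definition taylor_coeff :: "(complex \<Rightarrow> complex) \<Rightarrow> nat \<Rightarrow> complex" where
  "taylor_coeff F n = (deriv ^^ n) F 0 / fact n"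

lemma has_contour_integral_circlepath_0_iff:
  fixes R :: real
  shows "(g has_contour_integral I) (circlepath 0 R) \<longleftrightarrow>
     ((\<lambda>t. 2 * pi * \<i> * (g (R * cis (2 * pi * t)) * (R * cis (2 * pi * t)))) has_integral I) {0..1}"
proof -
  have "vector_derivative (circlepath 0 R) (at t within {0..1}) = 2 * pi * \<i> * (R * cis (2 * pi * t))"
    if "t \<in> {0..1}" for t
    using that by (simp add: vector_derivative_circlepath01 cis_conv_exp mult_ac)
  then show ?thesis
    unfolding has_contour_integral_def
    by (intro has_integral_cong) (simp add: circlepath cis_conv_exp mult_ac)
qed

lemma taylor_coeff_circle_integral:
  fixes F :: "complex \<Rightarrow> complex" and R :: real and n :: nat
  assumes "F holomorphic_on UNIV" and "R > 0"
  shows "((\<lambda>t. F (R * cis (2 * pi * t)) * cnj (cis (2 * pi * t)) ^ n)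
           has_integral taylor_coeff F n * R ^ n) {0..1}"
proof -
  have "((\<lambda>u. F u / (u - 0) ^ Suc n) has_contour_integral (2 * pi * \<i> / fact n * (deriv ^^ n) F 0))
          (circlepath 0 R)"
    using assms by (intro Cauchy_has_contour_integral_higher_derivative_circlepath)
      (auto intro: holomorphic_on_imp_continuous_on holomorphic_on_subset)
  moreover have "(\<lambda>t. 2 * pi * \<i> * (F (R * cis (2 * pi * t)) / (R * cis (2 * pi * t) - 0) ^ Suc n
                    * (R * cis (2 * pi * t))))
      = (\<lambda>t. 2 * pi * \<i> / R ^ n * (F (R * cis (2 * pi * t)) * cnj (cis (2 * pi * t)) ^ n))"
    using assms(2) by (simp add: power_mult_distrib cis_cnj field_simps flip: cis_inverse)
  ultimately have "((\<lambda>t. 2 * pi * \<i> / R ^ n * (F (R * cis (2 * pi * t)) * cnj (cis (2 * pi * t)) ^ n))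
               has_integral 2 * pi * \<i> / fact n * (deriv ^^ n) F 0) {0..1}"
    unfolding has_contour_integral_circlepath_0_iff by simp
  then show ?thesis
    using assms(2) unfolding taylor_coeff_def
    by (subst (asm) has_integral_mult_right_iff) (simp_all add: field_simps)
qed

lemma circle_integral_cis_power_eq_0:
  fixes F :: "complex \<Rightarrow> complex" and R :: real and n :: nat
  assumes "F holomorphic_on UNIV" and "R > 0" and "n \<ge> 1"
  shows "((\<lambda>t. F (R * cis (2 * pi * t)) * cis (2 * pi * t) ^ n) has_integral 0) {0..1}"
proof -
  have "((\<lambda>u. F u * u ^ (n - 1)) has_contour_integral 0) (circlepath 0 R)"
    using assms by (intro Cauchy_theorem_disc_simple[where a=0 and e="R+1"])
      (auto intro!: holomorphic_intros intro: holomorphic_on_subset)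
  moreover obtain m where "n = Suc m" using assms(3) by (cases n) auto
  then have "(\<lambda>t. 2 * pi * \<i> * (F (R * cis (2 * pi * t)) * (R * cis (2 * pi * t)) ^ (n - 1)
                    * (R * cis (2 * pi * t))))
      = (\<lambda>t. 2 * pi * \<i> * R ^ n * (F (R * cis (2 * pi * t)) * cis (2 * pi * t) ^ n))"
    by (simp add: power_mult_distrib mult_ac)
  ultimately have "((\<lambda>t. 2 * pi * \<i> * R ^ n * (F (R * cis (2 * pi * t)) * cis (2 * pi * t) ^ n))
               has_integral 0) {0..1}"
    unfolding has_contour_integral_circlepath_0_iff by simp
  then show ?thesis
    using assms(2) by (simp add: has_integral_mult_right_iff)
qed

lemma Re_circle_integral:
  fixes F :: "complex \<Rightarrow> complex" and R :: real and n :: nat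
  assumes "F holomorphic_on UNIV" and "R > 0" and "n \<ge> 1"
  shows "((\<lambda>t. Re (F (R * cis (2 * pi * t))) * (cnj (cis (2 * pi * t)) ^ n - (-1) ^ n * cis (2 * pi * t) ^ n))
           has_integral (taylor_coeff F n - (-1) ^ n * cnj (taylor_coeff F n)) * R ^ n / 2) {0..1}"
proof -
  define f where "f t = F (R * cis (2 * pi * t))" for t
  define z where "z t = cis (2 * pi * t)" for t
  define a where "a = taylor_coeff F n"
  have I1: "((\<lambda>t. f t * cnj (z t) ^ n) has_integral a * R ^ n) {0..1}"
    using taylor_coeff_circle_integral[OF assms(1,2)] by (simp add: f_def z_def a_def)
  have I2: "((\<lambda>t. cnj (f t) * cnj (z t) ^ n) has_integral 0) {0..1}"
    using has_integral_cnjI[OF circle_integral_cis_power_eq_0[OF assms]] by (simp add: f_def z_def)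
  have "((\<lambda>t. (f t * cnj (z t) ^ n + cnj (f t) * cnj (z t) ^ n) / 2) has_integral a * R ^ n / 2) {0..1}"
    using has_integral_divide[OF has_integral_add[OF I1 I2], of 2] by (simp only: add_0_right)
  moreover have "(f t * cnj (z t) ^ n + cnj (f t) * cnj (z t) ^ n) / 2 = Re (f t) * cnj (z t) ^ n" for t
    by (simp add: complex_add_cnj flip: distrib_right)
  ultimately have Re_cnj: "((\<lambda>t. Re (f t) * cnj (z t) ^ n) has_integral a * R ^ n / 2) {0..1}"
    by (simp only:)
  have Re: "((\<lambda>t. Re (f t) * z t ^ n) has_integral cnj a * R ^ n / 2) {0..1}"
    using has_integral_cnjI[OF Re_cnj] by simp
  show ?thesis
    using has_integral_diff[OF Re_cnj has_integral_mult_right[OF Re, of "(-1) ^ n"]]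
    unfolding f_def z_def a_def by (simp add: right_diff_distrib mult_ac diff_divide_distrib)
qed

lemma abs_Im_power_le:
  fixes v :: complex
  assumes "norm v \<le> 1"
  shows "\<bar>Im (v ^ n)\<bar> \<le> n * \<bar>Im v\<bar>"
proof (induction n)
  case (Suc n)
  have "Im (v ^ Suc n) = Re v * Im (v ^ n) + Re (v ^ n) * Im v"
    by simp
  then have "\<bar>Im (v ^ Suc n)\<bar> \<le> \<bar>Re v\<bar> * \<bar>Im (v ^ n)\<bar> + \<bar>Re (v ^ n)\<bar> * \<bar>Im v\<bar>"
    by (metis abs_mult abs_triangle_ineq)
  also have "\<dots> \<le> \<bar>Im (v ^ n)\<bar> + \<bar>Im v\<bar>"
  proof (intro add_mono mult_left_le_one_le)
    have "norm (v ^ n) \<le> 1" using assms by (simp add: norm_power power_le_one)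
    then show "\<bar>Re (v ^ n)\<bar> \<le> 1" using abs_Re_le_cmod order_trans by blast
    show "\<bar>Re v\<bar> \<le> 1" using assms abs_Re_le_cmod order_trans by blast
  qed simp_all
  finally show ?case using Suc.IH by (simp add: distrib_right)
qed simp

lemma norm_cnj_power_diff_le:
  fixes w :: complex
  assumes "norm w \<le> 1"
  shows "norm (cnj w ^ n - (-1) ^ n * w ^ n) \<le> 2 * n * \<bar>Re w\<bar>"
proof -
  define v where "v = \<i> * w"
  have "cnj w ^ n - (-1) ^ n * w ^ n = \<i> ^ n * (cnj (v ^ n) - v ^ n)"
  proof -
    have "\<i> ^ n * \<i> ^ n = (-1) ^ n" "\<i> ^ n * (- \<i>) ^ n = 1"
      by (simp_all flip: power_mult_distrib)
    then show ?thesis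
      by (simp add: v_def power_mult_distrib right_diff_distrib mult.assoc[symmetric])
  qed
  also have "cnj (v ^ n) - v ^ n = - 2 * \<i> * Im (v ^ n)"
    by (simp add: complex_eq_iff flip: complex_cnj_power)
  finally have "norm (cnj w ^ n - (-1) ^ n * w ^ n) = 2 * \<bar>Im (v ^ n)\<bar>"
    by (simp add: norm_mult norm_power)
  also have "\<dots> \<le> 2 * (n * \<bar>Im v\<bar>)"
    using abs_Im_power_le[of v n] assms by (simp add: v_def norm_mult)
  finally show ?thesis by (simp add: v_def)
qed

lemma taylor_coeff_bound:
  fixes F :: "complex \<Rightarrow> complex" and R :: real and n :: nat
  assumes "F holomorphic_on UNIV" and "R > 0" and "n \<ge> 1"
    and sign: "\<And>z. 0 \<le> Re z * Re (F z)"
  shows "norm (taylor_coeff F n - (-1) ^ n * cnj (taylor_coeff F n)) * R ^ n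
           \<le> 2 * real n * Re (taylor_coeff F 1) * R"
proof -
  define U where "U t = Re (F (R * cis (2 * pi * t)))" for t
  define z where "z t = cis (2 * pi * t)" for t
  define d where "d = (taylor_coeff F n - (-1) ^ n * cnj (taylor_coeff F n)) * R ^ n / 2"
  have In: "((\<lambda>t. U t * (cnj (z t) ^ n - (-1) ^ n * z t ^ n)) has_integral d) {0..1}"
    using Re_circle_integral[OF assms(1-3)] by (simp add: U_def z_def d_def)
  have "((\<lambda>t. U t * (cnj (z t) + z t)) has_integral Re (taylor_coeff F 1) * R) {0..1}"
    using Re_circle_integral[OF assms(1,2), of 1]
    by (simp add: U_def z_def complex_add_cnj mult.commute)
  then have I1: "((\<lambda>t. n * (U t * (cnj (z t) + z t))) has_integral n * (Re (taylor_coeff F 1) * R)) {0..1}"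
    using has_integral_mult_right[of _ _ _ "of_nat n"] by simp
  have "norm (integral {0..1} (\<lambda>t. U t * (cnj (z t) ^ n - (-1) ^ n * z t ^ n)))
          \<le> integral {0..1} (\<lambda>t. n * (U t * (cnj (z t) + z t))) \<bullet> 1"
  proof (rule integral_norm_bound_integral_component)
    show "(\<lambda>t. U t * (cnj (z t) ^ n - (-1) ^ n * z t ^ n)) integrable_on {0..1}"
      using In by blast
    show "(\<lambda>t. n * (U t * (cnj (z t) + z t))) integrable_on {0..1}"
      using I1 by blast
  next
    fix t :: real
    have "0 \<le> R * (Re (z t) * U t)"
      using sign[of "R * z t"] by (simp add: U_def z_def)
    then have nonneg: "0 \<le> U t * Re (z t)"
      using \<open>R > 0\<close> by (simp add: zero_le_mult_iff mult.commute)
    have "norm (U t * (cnj (z t) ^ n - (-1) ^ n * z t ^ n)) \<le> \<bar>U t\<bar> * (2 * real n * \<bar>Re (z t)\<bar>)"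
      unfolding norm_mult norm_of_real by (intro mult_left_mono norm_cnj_power_diff_le) (simp_all add: z_def)
    also have "\<dots> = 2 * real n * (U t * Re (z t))"
      using nonneg by (simp add: abs_mult[symmetric])
    also have "\<dots> = (n * (U t * (cnj (z t) + z t))) \<bullet> 1"
      by (simp add: complex_add_cnj)
    finally show "norm (U t * (cnj (z t) ^ n - (-1) ^ n * z t ^ n)) \<le> (n * (U t * (cnj (z t) + z t))) \<bullet> 1" .
  qed
  then have "norm d \<le> n * Re (taylor_coeff F 1) * R"
    unfolding integral_unique[OF In] integral_unique[OF I1] complex_inner_1_right by simp
  then show ?thesis
    using \<open>R > 0\<close> by (simp add: d_def norm_mult norm_divide norm_power)
qed

lemma power_le_linear_imp_zero:
  fixes a b :: real
  assumes "n \<ge> 2" and "a \<ge> 0" and le: "\<And>R. R > 0 \<Longrightarrow> a * R ^ n \<le> b * R"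
  shows "a = 0"
proof (rule ccontr)
  assume "a \<noteq> 0"
  with \<open>a \<ge> 0\<close> have "a > 0" by simp
  define R where "R = (\<bar>b\<bar> + 1) / a + 1"
  have "R > 1" using \<open>a > 0\<close> by (simp add: R_def)
  have "a * R * R \<le> a * R ^ n"
    using \<open>R > 1\<close> \<open>n \<ge> 2\<close> \<open>a > 0\<close> power_increasing[of 2 n R] by (simp add: power2_eq_square)
  also have "\<dots> \<le> b * R" using le \<open>R > 1\<close> by simp
  finally have "a * R \<le> b" using \<open>R > 1\<close> by simp
  moreover have "a * R = \<bar>b\<bar> + 1 + a" using \<open>a > 0\<close> by (simp add: R_def field_simps)
  ultimately show False using \<open>a > 0\<close> by linarith
qed

lemma higher_deriv_reflect:
  fixes F :: "complex \<Rightarrow> complex"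
  assumes "F holomorphic_on UNIV"
  shows "(deriv ^^ k) (\<lambda>z. c * cnj (F (- cnj z))) = (\<lambda>z. c * (-1) ^ k * cnj ((deriv ^^ k) F (- cnj z)))"
proof (induction k)
  case (Suc k)
  define G where "G = (deriv ^^ k) F"
  have "G holomorphic_on UNIV"
    unfolding G_def using assms by (rule holomorphic_higher_deriv) simp
  then have G': "(G has_field_derivative deriv G w) (at w)" for w
    by (auto intro: holomorphic_derivI[where S=UNIV])
  have "((\<lambda>w. G (- w)) has_field_derivative deriv G (- cnj z) * (-1)) (at (cnj z))" for z
    by (rule DERIV_chain2[OF G']) (auto intro!: derivative_eq_intros)
  from has_field_derivative_cnj_cnj[OF this]
  have "((\<lambda>z. c * (-1) ^ k * cnj (G (- cnj z))) has_field_derivative c * (-1) ^ Suc k * cnj (deriv G (- cnj z))) (at z)" for z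
    by (auto simp: comp_def intro!: derivative_eq_intros)
  then show ?case
    using Suc by (auto simp: G_def intro!: DERIV_imp_deriv)
qed simp

lemma cnj_taylor_coeff_odd_reflection:
  fixes F :: "complex \<Rightarrow> complex"
  assumes "F holomorphic_on UNIV" and sym: "\<And>z. F (- cnj z) = - cnj (F z)"
  shows "cnj (taylor_coeff F k) = - ((-1) ^ k * taylor_coeff F k)"
proof -
  have "F = (\<lambda>z. -1 * cnj (F (- cnj z)))"
    using sym by (metis complex_cnj_cnj complex_cnj_minus minus_minus mult_minus1)
  then have "(deriv ^^ k) F 0 = (deriv ^^ k) (\<lambda>z. -1 * cnj (F (- cnj z))) 0"
    by simp
  also have "\<dots> = - ((-1) ^ k * cnj ((deriv ^^ k) F 0))"
    by (subst higher_deriv_reflect[OF assms(1)]) simp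
  finally have "cnj ((deriv ^^ k) F 0) = cnj (- ((-1) ^ k * cnj ((deriv ^^ k) F 0)))"
    by (rule arg_cong)
  then show ?thesis
    by (simp add: taylor_coeff_def)
qed

lemma entire_affine_of_odd_reflection_sign:
  fixes F :: "complex \<Rightarrow> complex"
  assumes hol: "F holomorphic_on UNIV"
    and sym: "\<And>z. F (- cnj z) = - cnj (F z)"
    and sign: "\<And>z. 0 \<le> Re z * Re (F z)"
  shows "F z = F 0 + deriv F 0 * z"
proof -
  have "taylor_coeff F n = 0" if "n \<ge> 2" for n
  proof -
    have "norm (taylor_coeff F n) * R ^ n \<le> (n * Re (taylor_coeff F 1)) * R" if "R > 0" for R
    proof -
      have eq: "taylor_coeff F n - (-1) ^ n * cnj (taylor_coeff F n) = 2 * taylor_coeff F n"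
      proof -
        have "(-1) ^ n * (-1) ^ n = (1 :: complex)"
          by (simp flip: power_mult_distrib)
        then show ?thesis
          using cnj_taylor_coeff_odd_reflection[OF hol sym, of n] by (simp add: mult.assoc[symmetric])
      qed
      have "norm (2 * taylor_coeff F n) * R ^ n \<le> 2 * real n * Re (taylor_coeff F 1) * R"
        using taylor_coeff_bound[OF hol \<open>R > 0\<close> _ sign, of n] \<open>n \<ge> 2\<close> unfolding eq by simp
      then show ?thesis
        by (simp add: norm_mult mult.assoc)
    qed
    then have "norm (taylor_coeff F n) = 0"
      by (rule power_le_linear_imp_zero[OF \<open>n \<ge> 2\<close> norm_ge_zero])
    then show ?thesis
      by simp
  qed
  then have "(\<lambda>n. taylor_coeff F n * z ^ n) sums (\<Sum>n<2. taylor_coeff F n * z ^ n)"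
    by (intro sums_finite) auto
  moreover have "(\<lambda>n. taylor_coeff F n * (z - 0) ^ n) sums F z"
    unfolding taylor_coeff_def
    by (rule holomorphic_power_series[where r = "norm z + 1"]) (use hol in \<open>auto intro: holomorphic_on_subset\<close>)
  ultimately have "F z = (\<Sum>n<2. taylor_coeff F n * z ^ n)"
    using sums_unique2 by fastforce
  then show ?thesis
    by (simp add: numeral_2_eq_2 taylor_coeff_def)
qed

lemma bounded_affine_imp_slope_zero:
  fixes A B :: complex
  assumes "\<And>x. x \<ge> x1 \<Longrightarrow> norm (A + B * of_real x) \<le> K"
  shows "B = 0"
proof (rule ccontr)
  assume "B \<noteq> 0"
  define x where "x = max x1 0 + max 0 ((K + norm A + 1) / norm B)"
  have "x \<ge> x1" and "x \<ge> 0"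
    by (auto simp: x_def)
  have "norm B * x = norm (B * of_real x)"
    using \<open>x \<ge> 0\<close> by (simp add: norm_mult)
  also have "\<dots> \<le> norm (A + B * of_real x) + norm A"
    using norm_triangle_ineq4[of "A + B * of_real x" A] by simp
  also have "\<dots> \<le> K + norm A"
    using assms[OF \<open>x \<ge> x1\<close>] by simp
  finally have "norm B * x \<le> K + norm A" .
  moreover have "norm B * x \<ge> norm B * ((K + norm A + 1) / norm B)"
    by (intro mult_left_mono) (auto simp: x_def)
  ultimately show False
    using \<open>B \<noteq> 0\<close> by simp
qed

lemma dirichlet_series_bounded_right:
  fixes c :: "nat \<Rightarrow> complex" and x0 :: real
  assumes "Bseq (\<lambda>n. c n * of_nat n powr (- of_real x0))"
  obtains K where "\<And>x. x \<ge> x0 + 2 \<Longrightarrow> norm (\<Sum>n. c n * of_nat n powr (- of_real x)) \<le> K"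
proof -
  obtain M where M: "\<And>n. norm (c n * of_nat n powr (- of_real x0)) \<le> M"
    using assms unfolding Bseq_def by blast
  have summable: "summable (\<lambda>n. M * real n powr (-2))"
    using summable_real_powr_iff[of "-2"] by (intro summable_mult) simp
  have norm_powr: "norm (of_nat n powr (- of_real y) :: complex) = real n powr (- y)" for n y
    by (subst norm_powr_real_powr) auto
  have "norm (\<Sum>n. c n * of_nat n powr (- of_real x)) \<le> (\<Sum>n. M * real n powr (-2))"
    if "x \<ge> x0 + 2" for x
  proof -
    have term_bound: "norm (c n * of_nat n powr (- of_real x)) \<le> M * real n powr (-2)" for n
    proof (cases "n = 0")
      case False
      have "real n powr (- x) = real n powr (- x0) * real n powr (- (x - x0))"
        by (simp flip: powr_add)
      also have "\<dots> \<le> real n powr (- x0) * real n powr (-2)"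
        using False that by (intro mult_left_mono powr_mono) auto
      finally have "norm (c n) * real n powr (- x) \<le> (norm (c n) * real n powr (- x0)) * real n powr (-2)"
        by (simp add: mult_left_mono mult.assoc)
      also have "\<dots> \<le> M * real n powr (-2)"
        using M[of n] by (intro mult_right_mono) (auto simp: norm_mult norm_powr)
      finally show ?thesis
        by (simp add: norm_mult norm_powr)
    qed simp
    have "summable (\<lambda>n. norm (c n * of_nat n powr (- of_real x)))"
      by (rule summable_comparison_test[OF _ summable]) (use term_bound in auto)
    then have "norm (\<Sum>n. c n * of_nat n powr (- of_real x)) \<le> (\<Sum>n. norm (c n * of_nat n powr (- of_real x)))"
      by (rule summable_norm)
    also have "\<dots> \<le> (\<Sum>n. M * real n powr (-2))"
      by (intro suminf_le summable term_bound) fact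
    finally show ?thesis .
  qed
  then show ?thesis
    using that by blast
qed

lemma dirichlet_sums_affine_imp_slope_zero:
  fixes c :: "nat \<Rightarrow> complex" and A B :: complex and \<sigma> :: real
  assumes sums: "\<And>x::real. \<sigma> < x \<Longrightarrow> (\<lambda>n. c n * of_nat n powr (- of_real x)) sums (A + B * of_real x)"
  shows "B = 0"
proof -
  have "(\<lambda>n. c n * of_nat n powr (- of_real (\<sigma> + 1))) \<longlonglongrightarrow> 0"
    using sums[of "\<sigma> + 1"] by (intro summable_LIMSEQ_zero) (auto simp: sums_iff)
  then have "Bseq (\<lambda>n. c n * of_nat n powr (- of_real (\<sigma> + 1)))"
    by (rule convergent_imp_Bseq[OF convergentI])
  then obtain K where K: "\<And>x. x \<ge> \<sigma> + 1 + 2 \<Longrightarrow> norm (\<Sum>n. c n * of_nat n powr (- of_real x)) \<le> K"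
    using dirichlet_series_bounded_right by blast
  show ?thesis
  proof (rule bounded_affine_imp_slope_zero)
    fix x assume "x \<ge> \<sigma> + 3"
    then show "norm (A + B * of_real x) \<le> K"
      using K[of x] sums[of x] by (simp add: sums_iff)
  qed
qed

lemma odd_reflection_extension:
  fixes \<phi> :: "complex \<Rightarrow> complex"
  assumes holo: "\<phi> holomorphic_on C0"
    and cont: "continuous_on C0_closure \<phi>"
    and bdry: "\<forall>t::real. Re (\<phi> (\<i> * of_real t)) = 0"
  obtains F where "F holomorphic_on UNIV" and "\<And>z. 0 \<le> Re z \<Longrightarrow> F z = \<phi> z"
    and "\<And>z. F (- cnj z) = - cnj (F z)"
proof -
  \<comment> \<open>Rotate the right half-plane onto the upper one, where \<open>Schwarz_reflection\<close> applies.\<close>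
  define f where "f w = \<i> * \<phi> (- \<i> * w)" for w
  define G where "G z = (if 0 \<le> Im z then f z else cnj (f (cnj z)))" for z
  have "G holomorphic_on UNIV"
    unfolding G_def
  proof (rule Schwarz_reflection)
    show "f holomorphic_on (UNIV \<inter> {z. 0 < Im z})"
      unfolding f_def
      by (intro holomorphic_intros holomorphic_on_compose_gen[OF _ holo, unfolded comp_def])
         (auto simp: C0_def)
    show "continuous_on (UNIV \<inter> {z. 0 \<le> Im z}) f"
      unfolding f_def
      by (intro continuous_intros continuous_on_compose2[OF cont]) (auto simp: C0_closure_def)
    show "f z \<in> \<real>" if "z \<in> \<real>" for z
    proof -
      obtain t where "z = of_real t"
        using \<open>z \<in> \<real>\<close> by (auto elim: Reals_cases)
      moreover have "Re (\<phi> (\<i> * of_real (- t))) = 0"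
        using bdry by blast
      ultimately show ?thesis
        by (simp add: f_def complex_is_Real_iff)
    qed
  qed auto
  define F where "F z = - \<i> * G (\<i> * z)" for z
  have F_eq: "F z = (if 0 \<le> Re z then \<phi> z else - cnj (\<phi> (- cnj z)))" for z
    by (simp add: F_def G_def f_def)
  show ?thesis
  proof
    show "F holomorphic_on UNIV"
      unfolding F_def
      by (intro holomorphic_intros holomorphic_on_compose_gen[OF _ \<open>G holomorphic_on UNIV\<close>, unfolded comp_def])
         auto
    show "F z = \<phi> z" if "0 \<le> Re z" for z
      using that F_eq by simp
    show "F (- cnj z) = - cnj (F z)" for z
    proof (cases "Re z = 0")
      case True
      then have "- cnj z = z" and "z = \<i> * of_real (Im z)"
        by (simp_all add: complex_eq_iff)
      then have "Re (\<phi> z) = 0"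
        using bdry by metis
      then have "- cnj (\<phi> z) = \<phi> z"
        by (simp add: complex_eq_iff)
      moreover have "F z = \<phi> z"
        using F_eq[of z] True by simp
      ultimately show ?thesis
        using \<open>- cnj z = z\<close> by metis
    qed (auto simp: F_eq)
  qed
qed

lemma odd_reflection_sign:
  fixes F :: "complex \<Rightarrow> complex"
  assumes sym: "\<And>z. F (- cnj z) = - cnj (F z)"
    and pos: "\<And>z. 0 < Re z \<Longrightarrow> 0 < Re (F z)"
  shows "0 \<le> Re z * Re (F z)"
proof (cases "Re z" "0::real" rule: linorder_cases)
  case less
  have "Re (F z) = - Re (F (- cnj z))"
    using sym[of "- cnj z"] by simp
  moreover have "0 < Re (F (- cnj z))"
    using pos[of "- cnj z"] less by simp
  ultimately show ?thesis
    using less by (simp add: mult_nonpos_nonneg)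
next
  case greater
  then show ?thesis
    using pos[of z] by simp
qed simp

theorem theorem24:
  fixes \<phi> \<psi> :: "complex \<Rightarrow> complex" and c0 :: nat
  assumes holo: "\<phi> holomorphic_on C0"
    and maps: "\<phi> ` C0 \<subseteq> C0"
    and nonconst: "\<not> (\<exists>c. \<forall>s\<in>C0. \<phi> s = c)"
    and form: "\<forall>s\<in>C0. \<phi> s = of_nat c0 * s + \<psi> s"
    and psiD: "\<psi> \<in> Dclass"
    and comp: "\<forall>f\<in>Aplus. \<exists>g\<in>Aplus. \<forall>s\<in>C0. f (\<phi> s) = g s"
    and cont: "continuous_on C0_closure \<phi>"
    and bdry: "\<forall>t::real. Re (\<phi> (\<i> * of_real t)) = 0"
  shows "\<exists>\<tau>::real. \<forall>s\<in>C0. \<phi> s = of_nat c0 * s + \<i> * of_real \<tau>"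
proof -
  obtain F where hol: "F holomorphic_on UNIV" and F_\<phi>: "\<And>z. 0 \<le> Re z \<Longrightarrow> F z = \<phi> z"
    and sym: "\<And>z. F (- cnj z) = - cnj (F z)"
    using odd_reflection_extension[OF holo cont bdry] by blast
  have pos: "0 < Re (F z)" if "0 < Re z" for z
    using maps F_\<phi>[of z] that by (auto simp: C0_def)
  have affine: "F z = F 0 + deriv F 0 * z" for z
    using entire_affine_of_odd_reflection_sign[OF hol sym odd_reflection_sign[of F, OF sym pos]] .
  from psiD obtain c \<sigma> where \<psi>_sums: "\<And>s. \<sigma> < Re s \<Longrightarrow> (\<lambda>n. c n * of_nat n powr (- s)) sums \<psi> s"
    unfolding Dclass_def by blast
  have "\<psi> (of_real x) = F 0 + (deriv F 0 - of_nat c0) * of_real x" if "x > 0" for x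
    using form F_\<phi>[of "of_real x"] affine[of "of_real x"] that by (simp add: C0_def algebra_simps)
  then have "(\<lambda>n. c n * of_nat n powr (- of_real x)) sums (F 0 + (deriv F 0 - of_nat c0) * of_real x)"
    if "max \<sigma> 0 < x" for x
    using \<psi>_sums[of "of_real x"] that by simp
  then have "deriv F 0 - of_nat c0 = 0"
    by (rule dirichlet_sums_affine_imp_slope_zero)
  moreover have "F 0 = \<i> * of_real (Im (F 0))"
    using F_\<phi>[of 0] bdry[rule_format, of 0] by (simp add: complex_eq_iff)
  ultimately have "\<phi> s = of_nat c0 * s + \<i> * of_real (Im (F 0))" if "s \<in> C0" for s
    using that F_\<phi>[of s] affine[of s] by (simp add: C0_def add.commute)
  then show ?thesis
    by blast
qed

end
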